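(* Let $s,a,\sigma$ be positive integers, let $X$ be a set of cardinality $s$, and let $\pi_1,\ldots,\pi_\sigma$ be partitions of $X$ such that every part of every $\pi_i$ has cardinality at least $a$. Then there exists a subset $Y\subseteq X$ with $|Y|\ge s(1-1/a)^\sigma$ such that $Y$ contains no part of $\pi_i$ for any $i\in\{1,\ldots,\sigma\}$. *)

theory Defs
  imports Complex_Main "HOL-Library.Disjoint_Sets"
begin

end

theory Submission
  imports Defs
begin

text \<open>Deleting one point from every part of a disjoint family \<open>\<Q>\<close> that lies inside \<open>Y\<close>
  destroys all such parts; since these parts are disjoint subsets of \<open>Y\<close> of size at least \<open>a\<close>,
  at most \<open>|Y|/a\<close> points are deleted. Doing this successively for \<open>\<pi>\<^sub>1, \<dots>, \<pi>\<^sub>\<sigma>\<close> loses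
  a factor of at most \<open>1 - 1/a\<close> in each round.\<close>

lemma card_parts_within_mult_le:
  assumes "disjoint \<Q>" "finite Y" "\<And>P. P \<in> \<Q> \<Longrightarrow> a \<le> card P"
  shows "card {P \<in> \<Q>. P \<subseteq> Y} * a \<le> card Y"
proof -
  define B where "B = {P \<in> \<Q>. P \<subseteq> Y}"
  have "B \<subseteq> Pow Y" unfolding B_def by auto
  then have fin: "finite B" "\<And>P. P \<in> B \<Longrightarrow> finite P"
    using \<open>finite Y\<close> by (auto intro: finite_subset)
  have "card B * a \<le> sum card B"
    using assms(3) sum_bounded_below[of B a card] by (auto simp: B_def)
  also have "\<dots> = card (\<Union>B)"
    using card_Union_disjoint[of B] pairwise_subset[OF assms(1)] fin by (auto simp: B_def)
  also have "\<dots> \<le> card Y"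
    using \<open>finite Y\<close> by (intro card_mono) (auto simp: B_def)
  finally show ?thesis unfolding B_def .
qed

lemma large_subset_containing_no_part:
  fixes a :: nat
  assumes "a > 0" "finite Y" "disjoint \<Q>" "\<And>P. P \<in> \<Q> \<Longrightarrow> a \<le> card P"
  shows "\<exists>Z \<subseteq> Y. real (card Y) * (1 - 1 / real a) \<le> real (card Z) \<and> (\<forall>P \<in> \<Q>. \<not> P \<subseteq> Z)"
proof -
  define B where "B = {P \<in> \<Q>. P \<subseteq> Y}"
  define pick where "pick P = (SOME x. x \<in> P)" for P :: "'a set"
  define Z where "Z = Y - pick ` B"
  have nonempty: "P \<noteq> {}" if "P \<in> \<Q>" for P
    using assms(1) assms(4)[OF that] by (auto intro: Nat.gr0I)
  have "finite B" using \<open>finite Y\<close> unfolding B_def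
    by (rule finite_subset[rotated, OF finite_Pow_iff[THEN iffD2]]) auto
  have "card Y \<le> card (Z \<union> pick ` B)"
    using \<open>finite Y\<close> \<open>finite B\<close> unfolding Z_def by (intro card_mono) auto
  also have "\<dots> \<le> card Z + card (pick ` B)"
    by (rule card_Un_le)
  also have "\<dots> \<le> card Z + card B"
    using card_image_le[OF \<open>finite B\<close>, of pick] by simp
  finally have "real (card Y) \<le> real (card Z) + real (card B)"
    by linarith
  moreover have "real (card B) \<le> real (card Y) / real a"
    using card_parts_within_mult_le[OF assms(3,2,4)] \<open>a > 0\<close> unfolding B_def
    by (simp add: field_simps flip: of_nat_mult)
  ultimately have "real (card Y) * (1 - 1 / real a) \<le> real (card Z)"
    by (simp add: algebra_simps)
  moreover have "\<not> P \<subseteq> Z" if "P \<in> \<Q>" for P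
  proof
    assume "P \<subseteq> Z"
    then have "P \<in> B" using that unfolding B_def Z_def by auto
    then show False
      using \<open>P \<subseteq> Z\<close> some_in_eq[of P] nonempty[OF that] unfolding Z_def pick_def by blast
  qed
  ultimately show ?thesis unfolding Z_def by blast
qed

lemma large_subset_containing_no_part_of_families:
  fixes a :: nat and \<pi> :: "'i \<Rightarrow> 'a set set"
  assumes "a > 0" "finite X" "finite I"
    and "\<And>i. i \<in> I \<Longrightarrow> disjoint (\<pi> i)"
    and "\<And>i P. i \<in> I \<Longrightarrow> P \<in> \<pi> i \<Longrightarrow> a \<le> card P"
  shows "\<exists>Y \<subseteq> X. real (card X) * (1 - 1 / real a) ^ card I \<le> real (card Y)
           \<and> (\<forall>i \<in> I. \<forall>P \<in> \<pi> i. \<not> P \<subseteq> Y)"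
  using \<open>finite I\<close> assms(4,5)
proof (induction I rule: finite_induct)
  case empty
  then show ?case by auto
next
  case (insert j I)
  obtain Y where Y: "Y \<subseteq> X" "real (card X) * (1 - 1 / real a) ^ card I \<le> real (card Y)"
    "\<forall>i \<in> I. \<forall>P \<in> \<pi> i. \<not> P \<subseteq> Y"
    using insert.IH insert.prems by blast
  obtain Z where Z: "Z \<subseteq> Y" "real (card Y) * (1 - 1 / real a) \<le> real (card Z)"
    "\<forall>P \<in> \<pi> j. \<not> P \<subseteq> Z"
    using large_subset_containing_no_part[OF \<open>a > 0\<close> finite_subset[OF Y(1) \<open>finite X\<close>]
        insert.prems(1)[OF insertI1] insert.prems(2)[OF insertI1]] by blast
  have "real (card X) * (1 - 1 / real a) ^ card (insert j I)
      = real (card X) * (1 - 1 / real a) ^ card I * (1 - 1 / real a)"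
    using insert.hyps by simp
  also have "\<dots> \<le> real (card Y) * (1 - 1 / real a)"
    using Y(2) \<open>a > 0\<close> by (intro mult_right_mono) (simp_all add: field_simps)
  also have "\<dots> \<le> real (card Z)"
    by (rule Z(2))
  finally have "real (card X) * (1 - 1 / real a) ^ card (insert j I) \<le> real (card Z)" .
  moreover have "\<forall>i \<in> insert j I. \<forall>P \<in> \<pi> i. \<not> P \<subseteq> Z"
    using Y(3) Z(1,3) by blast
  ultimately show ?case using Y(1) Z(1) by blast
qed

theorem lemma2p7:
  fixes X :: "'a set" and s a \<sigma> :: nat and \<pi> :: "nat \<Rightarrow> 'a set set"
  assumes "s > 0" and "a > 0" and "\<sigma> > 0"
    and "finite X" and "card X = s"
    and "\<And>i. i \<in> {1..\<sigma>} \<Longrightarrow> partition_on X (\<pi> i)"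
    and "\<And>i P. i \<in> {1..\<sigma>} \<Longrightarrow> P \<in> \<pi> i \<Longrightarrow> card P \<ge> a"
  shows "\<exists>Y. Y \<subseteq> X \<and> real (card Y) \<ge> real s * (1 - 1 / real a) ^ \<sigma>
           \<and> (\<forall>i \<in> {1..\<sigma>}. \<forall>P \<in> \<pi> i. \<not> P \<subseteq> Y)"
proof -
  have "\<And>i. i \<in> {1..\<sigma>} \<Longrightarrow> disjoint (\<pi> i)"
    using assms(6) by (simp add: partition_on_def)
  then show ?thesis
    using large_subset_containing_no_part_of_families[OF \<open>a > 0\<close> \<open>finite X\<close> finite_atLeastAtMost[of 1 \<sigma>],
        where \<pi> = \<pi>] assms(5,7)
    by auto
qed

end
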